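(* The metric space $L_\omega$ satisfies $\operatorname{trasdim} L_\omega=\omega$, where $\omega$ is the first infinite ordinal.
   Context: Let $X=\bigsqcup_{i=1}^\infty\mathbb Z^i$ (disjoint union). For $a=(a_1,\dots,a_l)\in\mathbb Z^l$ and $b=(b_1,\dots,b_k)\in\mathbb Z^k$ with $l\le k$, let $a'=(a_1,\dots,a_l,0,\dots,0)\in\mathbb Z^k$, let $c=0$ if $l=k$ and $c=l+(l+1)+\dots+(k-1)$ if $l<k$, and set $d_\infty(a,b)=d_\infty(b,a)=\max\{d(a',b),c\}$, where $d$ is the sup-metric $d(x,y)=\max_j|x_j-y_j|$ on $\mathbb Z^k$. $L_\infty=(X,d_\infty)$, and $L_\omega=\bigcup_{k=1}^\infty(k\mathbb Z)^k\subset L_\infty$ with the restricted metric, where $k\mathbb Z=\{kl:l\in\mathbb Z\}$ and $(k\mathbb Z)^k\subset\mathbb Z^k$. A family $\mathcal A$ of subsets is uniformly bounded if there is $C>0$ with $\operatorname{diam}A\le C$ for all $A\in\mathcal A$; it is $r$-disjoint if $d(A_1,A_2)\ge r$ for all distinct $A_1,A_2\in\mathcal A$. For a set $L$, $\mathrm{Fin}\,L$ is the collection of finite nonempty subsets of $L$. For $M\subset \mathrm{Fin}\,L$ and $\sigma\in\{\emptyset\}\cup\mathrm{Fin}\,L$, $M^\sigma=\{\tau\in\mathrm{Fin}\,L:\sigma\cup\tau\in M,\ \sigma\cap\tau=\emptyset\}$, and $M^a=M^{\{a\}}$. The ordinal $\operatorname{Ord}M$: $\operatorname{Ord}M=0$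 iff $M=\emptyset$; $\operatorname{Ord}M\le\alpha$ iff $\operatorname{Ord}M^a<\alpha$ for every $a\in L$; $\operatorname{Ord}M=\alpha$ iff $\operatorname{Ord}M\le\alpha$ and not $\operatorname{Ord}M<\alpha$; $\operatorname{Ord}M=\infty$ iff $\operatorname{Ord} M\le\alpha$ for no ordinal $\alpha$. For a metric space $(X,d)$, $A(X,d)$ is the set of $\sigma\in\mathrm{Fin}\,\mathbb N$ such that there do NOT exist uniformly bounded families $\mathcal V_i$, $i\in\sigma$, with $\bigcup_{i\in\sigma}\mathcal V_i$ covering $X$ and each $\mathcal V_i$ being $i$-disjoint. Define $\operatorname{trasdim}X=\operatorname{Ord}A(X,d)$, except $\operatorname{trasdim}X=-1$ iff $X$ is bounded. *)

theory Defs
  imports Main "HOL-Library.Extended_Nat"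
begin

definition Fin :: "'a set \<Rightarrow> 'a set set" where
  "Fin L = {\<sigma>. \<sigma> \<subseteq> L \<and> finite \<sigma> \<and> \<sigma> \<noteq> {}}"

definition Mup :: "'a set \<Rightarrow> 'a set set \<Rightarrow> 'a set \<Rightarrow> 'a set set" where
  "Mup L M \<sigma> = {\<tau> \<in> Fin L. \<sigma> \<union> \<tau> \<in> M \<and> \<sigma> \<inter> \<tau> = {}}"

inductive Ord_le :: "'a set \<Rightarrow> 'a set set \<Rightarrow> 'o::wellorder \<Rightarrow> bool" for L where
  empty: "M = {} \<Longrightarrow> Ord_le L M \<alpha>"
| step: "(\<forall>a\<in>L. \<exists>\<beta><\<alpha>. Ord_le L (Mup L M {a}) \<beta>) \<Longrightarrow> Ord_le L M \<alpha>"

definition Ord_lt :: "'a set \<Rightarrow> 'a set set \<Rightarrow> 'o::wellorder \<Rightarrow> bool" where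
  "Ord_lt L M \<alpha> \<longleftrightarrow> (\<exists>\<beta><\<alpha>. Ord_le L M \<beta>)"

definition Ord_eq :: "'a set \<Rightarrow> 'a set set \<Rightarrow> 'o::wellorder \<Rightarrow> bool" where
  "Ord_eq L M \<alpha> \<longleftrightarrow> Ord_le L M \<alpha> \<and> \<not> Ord_lt L M \<alpha>"

definition Npos :: "nat set" where "Npos = {i. i \<ge> 1}"

definition unif_bounded :: "('x \<Rightarrow> 'x \<Rightarrow> int) \<Rightarrow> 'x set set \<Rightarrow> bool" where
  "unif_bounded d \<V> \<longleftrightarrow> (\<exists>C>0. \<forall>A\<in>\<V>. \<forall>x\<in>A. \<forall>y\<in>A. d x y \<le> C)"

definition r_disjoint :: "('x \<Rightarrow> 'x \<Rightarrow> int) \<Rightarrow> nat \<Rightarrow> 'x set set \<Rightarrow> bool" where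
  "r_disjoint d r \<V> \<longleftrightarrow>
     (\<forall>A1\<in>\<V>. \<forall>A2\<in>\<V>. A1 \<noteq> A2 \<longrightarrow> (\<forall>x\<in>A1. \<forall>y\<in>A2. d x y \<ge> int r))"

definition Aset :: "'x set \<Rightarrow> ('x \<Rightarrow> 'x \<Rightarrow> int) \<Rightarrow> nat set set" where
  "Aset S d = {\<sigma> \<in> Fin Npos. \<not> (\<exists>\<V> :: nat \<Rightarrow> 'x set set.
        (\<forall>i\<in>\<sigma>. \<V> i \<subseteq> Pow S \<and> unif_bounded d (\<V> i) \<and> r_disjoint d i (\<V> i))
        \<and> S \<subseteq> \<Union>(\<Union>i\<in>\<sigma>. \<V> i))}"

definition bounded_space :: "'x set \<Rightarrow> ('x \<Rightarrow> 'x \<Rightarrow> int) \<Rightarrow> bool" where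
  "bounded_space S d \<longleftrightarrow> (\<exists>C. \<forall>x\<in>S. \<forall>y\<in>S. d x y \<le> C)"

text \<open>trasdim (S,d) = omega, where omega is \<infinity> :: enat (the ordinals below omega
  being the naturals).  trasdim = -1 iff the space is bounded.\<close>
definition trasdim_eq_omega :: "'x set \<Rightarrow> ('x \<Rightarrow> 'x \<Rightarrow> int) \<Rightarrow> bool" where
  "trasdim_eq_omega S d \<longleftrightarrow> \<not> bounded_space S d \<and> Ord_eq Npos (Aset S d) (\<infinity> :: enat)"

text \<open>A point of Z^k (k \<ge> 1) is an int list of length k.\<close>
definition Xinf :: "int list set" where
  "Xinf = {a. length a \<ge> 1}"

definition supdist :: "int list \<Rightarrow> int list \<Rightarrow> int" where
  "supdist x y = Max (insert 0 {\<bar>x ! j - y ! j\<bar> | j. j < length y})"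

definition dinf_aux :: "int list \<Rightarrow> int list \<Rightarrow> int" where
  "dinf_aux a b = (let l = length a; k = length b in
      max (supdist (a @ replicate (k - l) 0) b) (int (\<Sum>{l..<k})))"

definition dinf :: "int list \<Rightarrow> int list \<Rightarrow> int" where
  "dinf a b = (if length a \<le> length b then dinf_aux a b else dinf_aux b a)"

definition Lomega :: "int list set" where
  "Lomega = {a. length a \<ge> 1 \<and> (\<forall>j<length a. int (length a) dvd a ! j)}"

end

theory Submission
  imports Defs "HOL-Analysis.Brouwer_Fixpoint"
begin

(* Upper bound: let a be in sigma with card sigma > 2^a. Points of dimension at least a are
   a-separated (distinct points of (kZ)^k, or of different dimensions, are at distance at least
   the smaller dimension), so their singletons form one family. The other points are cut into
   cubes of side M = max sigma; these have bounded diameter, and two cubes whose indices have the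
   same parity in every coordinate are more than M apart. The 2^a parity patterns are assigned
   injectively to sigma - {a}. Hence every member of A^a has at most 2^a elements and
   Ord A <= omega.

   Lower bound: suppose families V_i, i in {2m+1..3m}, cover L_omega. Embed the grid {0..p}^m into
   (mZ)^m by x |-> m x and call a grid point low or high in direction j according to whether the
   set of V_(2m+1+j) containing it reaches the half-space "j-th coordinate <= m" or not. Grid
   points at grid distance 2 are at most 2m apart, so low and high points are separated, and the
   uniform bound keeps them away from opposite faces of the cube. Kuhn's combinatorial lemma (a
   discrete Lebesgue covering theorem) yields a grid point that is neither, a contradiction. So
   {2m+1..3m} is in A for every m, and Ord A is not finite. *)

section \<open>The metric d_\<infinity>\<close>

definition coord :: "int list \<Rightarrow> nat \<Rightarrow> int" where
  "coord x j = (if j < length x then x ! j else 0)"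

lemma supdist_ge: "j < length b \<Longrightarrow> \<bar>a ! j - b ! j\<bar> \<le> supdist a b"
  unfolding supdist_def by (intro Max_ge) auto

lemma supdist_nonneg: "0 \<le> supdist a b"
  unfolding supdist_def by (intro Max_ge) auto

lemma supdist_le:
  "0 \<le> B \<Longrightarrow> (\<And>j. j < length b \<Longrightarrow> \<bar>a ! j - b ! j\<bar> \<le> B) \<Longrightarrow> supdist a b \<le> B"
  unfolding supdist_def by (subst Max_le_iff) auto

lemma dinf_commute: "dinf a b = dinf b a"
proof -
  have "supdist a b = supdist b a" if "length a = length b"
    unfolding supdist_def using that by (metis abs_minus_commute)
  then show ?thesis
    by (auto simp: dinf_def dinf_aux_def)
qed

lemma nth_zero_padding:
  "length a \<le> k \<Longrightarrow> j < k \<Longrightarrow> (a @ replicate (k - length a) 0) ! j = coord a j"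
  by (simp add: coord_def nth_append)

lemma abs_coord_diff_le_dinf_aux:
  assumes "length a \<le> length b"
  shows "\<bar>coord a j - coord b j\<bar> \<le> dinf_aux a b"
proof (cases "j < length b")
  case True
  then have "\<bar>coord a j - coord b j\<bar> \<le> supdist (a @ replicate (length b - length a) 0) b"
    using supdist_ge[OF True, of "a @ replicate (length b - length a) 0"] assms
    by (simp add: nth_zero_padding coord_def)
  then show ?thesis
    by (simp add: dinf_aux_def Let_def)
next
  case False
  with assms have "coord a j = 0" "coord b j = 0"
    by (auto simp: coord_def)
  then show ?thesis
    using supdist_nonneg by (simp add: dinf_aux_def Let_def max.coboundedI1)
qed

lemma abs_coord_diff_le_dinf: "\<bar>coord a j - coord b j\<bar> \<le> dinf a b"
  using abs_coord_diff_le_dinf_aux[of a b j] abs_coord_diff_le_dinf_aux[of b a j]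
  by (auto simp: dinf_def abs_minus_commute)

lemma dinf_aux_le:
  assumes "length a \<le> length b" "0 \<le> B" and "\<And>j. \<bar>coord a j - coord b j\<bar> \<le> B"
  shows "dinf_aux a b \<le> B + int (length b ^ 2)"
proof -
  have "\<Sum>{length a..<length b} \<le> card {length a..<length b} * length b"
    using sum_bounded_above[of "{length a..<length b}" "\<lambda>i. i" "length b"] by simp
  also have "\<dots> \<le> length b ^ 2"
    by (simp add: power2_eq_square)
  moreover have "supdist (a @ replicate (length b - length a) 0) b \<le> B"
  proof (rule supdist_le[OF assms(2)])
    fix j assume "j < length b"
    then show "\<bar>(a @ replicate (length b - length a) 0) ! j - b ! j\<bar> \<le> B"
      using assms(1) assms(3)[of j] by (simp add: nth_zero_padding coord_def)
  qed
  ultimately show ?thesis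
    using assms(2) unfolding dinf_aux_def Let_def by linarith
qed

lemma dinf_le:
  assumes "0 \<le> B" and "\<And>j. \<bar>coord a j - coord b j\<bar> \<le> B"
  shows "dinf a b \<le> B + int (max (length a) (length b) ^ 2)"
proof (cases "length a \<le> length b")
  case True
  then show ?thesis
    using dinf_aux_le[OF True assms] by (simp add: dinf_def max_def)
next
  case False
  have "\<bar>coord b j - coord a j\<bar> \<le> B" for j
    using assms(2)[of j] by (simp add: abs_minus_commute)
  then show ?thesis
    using dinf_aux_le[of b a B] False assms(1) by (simp add: dinf_def max_def)
qed

lemma dinf_same_length: "length a = length b \<Longrightarrow> dinf a b = supdist a b"
  using supdist_nonneg[of a b] by (simp add: dinf_def dinf_aux_def)

lemma dinf_self: "dinf a a = 0"
  using supdist_le[of 0 a a] supdist_nonneg[of a a] by (simp add: dinf_same_length)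

lemma sum_lengths_le_dinf: "length a < length b \<Longrightarrow> int (\<Sum>{length a..<length b}) \<le> dinf a b"
  by (simp add: dinf_def dinf_aux_def Let_def)

lemma dinf_Lomega_ge_min_length:
  assumes "x \<in> Lomega" "y \<in> Lomega" "x \<noteq> y"
  shows "int (min (length x) (length y)) \<le> dinf x y"
proof (cases "length x = length y")
  case True
  with assms(3) obtain j where j: "j < length y" "x ! j \<noteq> y ! j"
    by (auto simp: list_eq_iff_nth_eq)
  have "int (length y) dvd x ! j - y ! j"
    using assms(1,2) j(1) True by (simp add: Lomega_def)
  then have "int (length y) \<le> \<bar>x ! j - y ! j\<bar>"
    using dvd_imp_le_int[of "x ! j - y ! j" "int (length y)"] j(2) by simp
  also have "\<dots> \<le> dinf x y"
    using supdist_ge[OF j(1)] True by (simp add: dinf_same_length)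
  finally show ?thesis
    using True by simp
next
  case False
  have "int (length a) \<le> dinf a b" if "length a < length b" for a b
  proof -
    have "length a \<le> \<Sum>{length a..<length b}"
      using that by (intro member_le_sum) auto
    then show ?thesis
      using sum_lengths_le_dinf[OF that] by linarith
  qed
  from this[of x y] this[of y x] False show ?thesis
    by (metis dinf_commute linorder_neqE_nat min.absorb3 min.commute)
qed

section \<open>Ordinals of families of finite sets\<close>

lemma Mup_subset_Fin: "Mup L M \<sigma> \<subseteq> Fin L"
  by (auto simp: Mup_def)

lemma Ord_le_enat_if_card_le:
  assumes "M \<subseteq> Fin L" and "\<forall>\<tau>\<in>M. card \<tau> \<le> n"
  shows "Ord_le L M (enat n)"
  using assms
proof (induction n arbitrary: M)
  case 0
  then have "M = {}"
    by (force simp: Fin_def)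
  then show ?case
    by (rule Ord_le.empty)
next
  case (Suc n)
  have "Ord_le L (Mup L M {a}) (enat n)" if "a \<in> L" for a
  proof (rule Suc.IH[OF Mup_subset_Fin], intro ballI)
    fix \<tau> assume "\<tau> \<in> Mup L M {a}"
    then have "insert a \<tau> \<in> M" "a \<notin> \<tau>" "finite \<tau>"
      by (auto simp: Mup_def Fin_def)
    then show "card \<tau> \<le> n"
      using Suc.prems(2) by fastforce
  qed
  then show ?case
    by (intro Ord_le.step) (auto intro: exI[of _ "enat n"])
qed

lemma card_le_if_Ord_le:
  assumes "Ord_le L M \<alpha>" and "M \<subseteq> Fin L" and "\<tau> \<in> M"
  shows "enat (card \<tau>) \<le> \<alpha>"
  using assms
proof (induction arbitrary: \<tau> rule: Ord_le.induct)
  case (empty M \<alpha>)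
  then show ?case by simp
next
  case (step \<alpha> M)
  from step.prems have \<tau>: "\<tau> \<subseteq> L" "finite \<tau>" "\<tau> \<noteq> {}"
    by (auto simp: Fin_def)
  then obtain a where a: "a \<in> \<tau>" "a \<in> L"
    by blast
  with step.IH obtain \<beta> where \<beta>: "\<beta> < \<alpha>"
    and IH: "\<And>\<tau>'. \<tau>' \<in> Mup L M {a} \<Longrightarrow> enat (card \<tau>') \<le> \<beta>"
    using Mup_subset_Fin by blast
  have "enat (card (\<tau> - {a})) \<le> \<beta>"
  proof (cases "\<tau> = {a}")
    case True
    then show ?thesis
      by (simp flip: zero_enat_def)
  next
    case False
    then have "\<tau> - {a} \<in> Mup L M {a}"
      using a \<tau> step.prems by (auto simp: Mup_def Fin_def insert_absorb)
    then show ?thesis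
      by (rule IH)
  qed
  then have "enat (card (\<tau> - {a})) < \<alpha>"
    using \<beta> by (rule order_le_less_trans)
  then show ?case
    using card_Suc_Diff1[OF \<tau>(2) a(1)] by (metis Suc_ile_eq)
qed

section \<open>Upper bound: covering by cubes\<close>

lemma int_div_mult_bounds:
  fixes u M :: int
  assumes "0 < M"
  shows "M * (u div M) \<le> u" and "u < M * (u div M) + M"
  using mult_div_mod_eq[of M u] pos_mod_sign[OF assms, of u] pos_mod_bound[OF assms, of u]
  by linarith+

lemma abs_diff_less_if_div_eq:
  fixes u v M :: int
  assumes "0 < M" and "u div M = v div M"
  shows "\<bar>u - v\<bar> < M"
proof -
  have "M * (u div M) = M * (v div M)"
    using assms(2) by simp
  then show ?thesis
    using int_div_mult_bounds[OF assms(1), of u] int_div_mult_bounds[OF assms(1), of v]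
    by linarith
qed

lemma abs_diff_gt_if_div_far:
  fixes u v M :: int
  assumes "0 < M" and "2 \<le> \<bar>u div M - v div M\<bar>"
  shows "M < \<bar>u - v\<bar>"
proof -
  have "2 * M \<le> M * \<bar>u div M - v div M\<bar>"
    using assms by simp
  also have "\<dots> = \<bar>M * (u div M) - M * (v div M)\<bar>"
    using assms(1) by (simp add: abs_mult flip: right_diff_distrib)
  finally have "2 * M \<le> \<bar>M * (u div M) - M * (v div M)\<bar>" .
  then show ?thesis
    using int_div_mult_bounds[OF assms(1), of u] int_div_mult_bounds[OF assms(1), of v]
    by linarith
qed

definition cube_index :: "nat \<Rightarrow> int list \<Rightarrow> nat \<Rightarrow> int" where
  "cube_index M x j = coord x j div int M"

definition cube_parity :: "nat \<Rightarrow> int list \<Rightarrow> nat set" where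
  "cube_parity M x = {j. odd (cube_index M x j)}"

definition cube_cell :: "int list set \<Rightarrow> nat \<Rightarrow> int list \<Rightarrow> int list set" where
  "cube_cell S M x = {y \<in> S. cube_index M y = cube_index M x}"

lemma cube_parity_subset: "cube_parity M x \<subseteq> {..<length x}"
  by (auto simp: cube_parity_def cube_index_def coord_def)

lemma dinf_le_if_cube_index_eq:
  assumes "0 < M" and "cube_index M x = cube_index M y"
  shows "dinf x y \<le> int M + int (max (length x) (length y) ^ 2)"
proof (rule dinf_le)
  fix j
  have "coord x j div int M = coord y j div int M"
    using fun_cong[OF assms(2), of j] by (simp add: cube_index_def)
  then show "\<bar>coord x j - coord y j\<bar> \<le> int M"
    using abs_diff_less_if_div_eq[of "int M"] assms(1) by (simp add: less_imp_le)
qed simp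

lemma dinf_gt_if_cube_parity_eq:
  assumes "0 < M" and "cube_index M x \<noteq> cube_index M y" and "cube_parity M x = cube_parity M y"
  shows "int M < dinf x y"
proof -
  obtain j where j: "cube_index M x j \<noteq> cube_index M y j"
    using assms(2) by blast
  have "odd (cube_index M x j) \<longleftrightarrow> odd (cube_index M y j)"
    using assms(3) by (auto simp: cube_parity_def)
  then have "2 \<le> \<bar>cube_index M x j - cube_index M y j\<bar>"
    using j by presburger
  then have "int M < \<bar>coord x j - coord y j\<bar>"
    using assms(1) by (intro abs_diff_gt_if_div_far) (simp_all add: cube_index_def)
  then show ?thesis
    using abs_coord_diff_le_dinf[of x j y] by linarith
qed

lemma unif_bounded_cube_cells:
  assumes "0 < M" and "\<forall>x\<in>S. length x \<le> a"
  shows "unif_bounded dinf (cube_cell S M ` T)"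
  unfolding unif_bounded_def
proof (intro exI[of _ "int M + int (a ^ 2) + 1"] conjI ballI)
  fix A y y' assume "A \<in> cube_cell S M ` T" "y \<in> A" "y' \<in> A"
  then have "cube_index M y = cube_index M y'" "length y \<le> a" "length y' \<le> a"
    using assms(2) by (auto simp: cube_cell_def)
  moreover from this have "max (length y) (length y') ^ 2 \<le> a ^ 2"
    by (simp add: power_mono)
  ultimately show "dinf y y' \<le> int M + int (a ^ 2) + 1"
    using dinf_le_if_cube_index_eq[OF assms(1), of y y'] by linarith
qed simp

lemma cube_parity_eq_if_cube_index_eq:
  "cube_index M x = cube_index M y \<Longrightarrow> cube_parity M x = cube_parity M y"
  by (simp add: cube_parity_def)

lemma r_disjoint_cube_cells:
  assumes "0 < M" and "\<And>x x'. x \<in> T \<Longrightarrow> x' \<in> T \<Longrightarrow> cube_parity M x = cube_parity M x'"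
  shows "r_disjoint dinf M (cube_cell S M ` T)"
  unfolding r_disjoint_def
proof (intro ballI impI)
  fix A A' y y' assume A: "A \<in> cube_cell S M ` T" "A' \<in> cube_cell S M ` T" "A \<noteq> A'"
    and y: "y \<in> A" "y' \<in> A'"
  then obtain x x' where x: "x \<in> T" "x' \<in> T" "A = cube_cell S M x" "A' = cube_cell S M x'"
    by blast
  with y have y_x: "cube_index M y = cube_index M x" "cube_index M y' = cube_index M x'"
    by (simp_all add: cube_cell_def)
  have "cube_index M x \<noteq> cube_index M x'"
  proof
    assume "cube_index M x = cube_index M x'"
    then have "A = A'"
      using x(3,4) by (simp add: cube_cell_def)
    with A(3) show False ..
  qed
  then have index_ne: "cube_index M y \<noteq> cube_index M y'"
    using y_x by simp
  have "cube_parity M y = cube_parity M x"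
    by (rule cube_parity_eq_if_cube_index_eq[OF y_x(1)])
  also have "\<dots> = cube_parity M x'"
    by (rule assms(2)[OF x(1,2)])
  also have "\<dots> = cube_parity M y'"
    by (rule cube_parity_eq_if_cube_index_eq[OF y_x(2), symmetric])
  finally have "int M < dinf y y'"
    by (rule dinf_gt_if_cube_parity_eq[OF assms(1) index_ne])
  then show "int M \<le> dinf y y'"
    by simp
qed

lemma unif_bounded_singletons: "unif_bounded dinf ((\<lambda>x. {x}) ` S)"
  unfolding unif_bounded_def by (auto simp: dinf_self intro!: exI[of _ 1])

lemma r_disjoint_Lomega_singletons:
  assumes "S \<subseteq> {x \<in> Lomega. r \<le> length x}"
  shows "r_disjoint dinf r ((\<lambda>x. {x}) ` S)"
  unfolding r_disjoint_def
proof (intro ballI impI)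
  fix A A' x x' assume "A \<in> (\<lambda>x. {x}) ` S" "A' \<in> (\<lambda>x. {x}) ` S" "A \<noteq> A'" "x \<in> A" "x' \<in> A'"
  then have "x \<in> Lomega" "x' \<in> Lomega" "x \<noteq> x'" "r \<le> min (length x) (length x')"
    using assms by auto
  then show "int r \<le> dinf x x'"
    using dinf_Lomega_ge_min_length[of x x'] by linarith
qed

lemma r_disjoint_mono: "r_disjoint d r V \<Longrightarrow> s \<le> r \<Longrightarrow> r_disjoint d s V"
  unfolding r_disjoint_def by force

lemma parity_class_cube_cells:
  assumes "0 < M" and "inj_on e (Pow {..<a})" and "\<forall>x\<in>S. length x \<le> a"
  shows "unif_bounded dinf (cube_cell S M ` {x \<in> S. e (cube_parity M x) = i})"
    and "r_disjoint dinf M (cube_cell S M ` {x \<in> S. e (cube_parity M x) = i})"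
proof -
  have parity: "cube_parity M x \<in> Pow {..<a}" if "x \<in> S" for x
  proof -
    have "{..<length x} \<subseteq> {..<a}"
      using that assms(3) by auto
    then show ?thesis
      using cube_parity_subset[of M x] by auto
  qed
  have same_parity: "cube_parity M x = cube_parity M x'"
    if "x \<in> S" "x' \<in> S" "e (cube_parity M x) = e (cube_parity M x')" for x x'
    using assms(2) parity[OF that(1)] parity[OF that(2)] that(3) by (simp add: inj_on_eq_iff)
  show "unif_bounded dinf (cube_cell S M ` {x \<in> S. e (cube_parity M x) = i})"
    by (rule unif_bounded_cube_cells[OF assms(1,3)])
  show "r_disjoint dinf M (cube_cell S M ` {x \<in> S. e (cube_parity M x) = i})"
    by (rule r_disjoint_cube_cells[OF assms(1)]) (simp add: same_parity)
qed

lemma Lomega_cover_if_card_gt: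
  assumes "\<sigma> \<in> Fin Npos" and a: "a \<in> \<sigma>" and card: "2 ^ a < card \<sigma>"
  shows "\<exists>V. (\<forall>i\<in>\<sigma>. V i \<subseteq> Pow Lomega \<and> unif_bounded dinf (V i) \<and> r_disjoint dinf i (V i))
           \<and> Lomega \<subseteq> \<Union>(\<Union>i\<in>\<sigma>. V i)"
proof -
  have fin: "finite \<sigma>" and "0 < a"
    using assms(1) a by (auto simp: Fin_def Npos_def)
  define M where "M = Max \<sigma>"
  have le_M: "i \<le> M" if "i \<in> \<sigma>" for i
    using fin that by (simp add: M_def)
  with a \<open>0 < a\<close> have "0 < M"
    by (meson less_le_trans)
  have "card (Pow {..<a}) \<le> card (\<sigma> - {a})"
    using card a fin by (simp add: card_Pow)
  then obtain e where e: "inj_on e (Pow {..<a})" "e ` Pow {..<a} \<subseteq> \<sigma> - {a}"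
    using card_le_inj[of "Pow {..<a}" "\<sigma> - {a}"] fin by auto
  define short where "short = {x \<in> Lomega. length x < a}"
  have short: "\<forall>x\<in>short. length x \<le> a"
    by (simp add: short_def)
  define V where "V i = (if i = a then (\<lambda>x. {x}) ` {x \<in> Lomega. a \<le> length x}
      else cube_cell short M ` {x \<in> short. e (cube_parity M x) = i})" for i
  have "V i \<subseteq> Pow Lomega \<and> unif_bounded dinf (V i) \<and> r_disjoint dinf i (V i)" if "i \<in> \<sigma>" for i
  proof (cases "i = a")
    case True
    then show ?thesis
      using unif_bounded_singletons r_disjoint_Lomega_singletons by (auto simp: V_def)
  next
    case False
    note cells = parity_class_cube_cells[OF \<open>0 < M\<close> e(1) short, of i]
    have "r_disjoint dinf i (V i)"
      using r_disjoint_mono[OF cells(2) le_M[OF that]] False by (simp add: V_def)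
    then show ?thesis
      using cells(1) False by (auto simp: V_def cube_cell_def short_def)
  qed
  moreover have "x \<in> \<Union>(\<Union>i\<in>\<sigma>. V i)" if x: "x \<in> Lomega" for x
  proof (cases "a \<le> length x")
    case True
    then have "{x} \<in> V a"
      using x by (simp add: V_def)
    then show ?thesis
      using a by blast
  next
    case False
    then have "x \<in> short"
      using x by (simp add: short_def)
    have "cube_parity M x \<in> Pow {..<a}"
      using cube_parity_subset[of M x] False by auto
    then have "e (cube_parity M x) \<in> \<sigma> - {a}"
      using e(2) by blast
    moreover have "x \<in> cube_cell short M x" "cube_cell short M x \<in> V (e (cube_parity M x))"
      using \<open>x \<in> short\<close> calculation by (auto simp: V_def cube_cell_def)
    ultimately show ?thesis
      by blast
  qed
  ultimately show ?thesis
    by blast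
qed

lemma card_le_if_in_Aset_Lomega:
  assumes "\<sigma> \<in> Aset Lomega dinf" and "a \<in> \<sigma>"
  shows "card \<sigma> \<le> 2 ^ a"
  using assms Lomega_cover_if_card_gt[of \<sigma> a] unfolding Aset_def by fastforce

section \<open>Lower bound: Kuhn's lemma on a scaled grid\<close>

definition grid_close :: "nat \<Rightarrow> nat \<Rightarrow> (nat \<Rightarrow> nat) \<Rightarrow> (nat \<Rightarrow> nat) \<Rightarrow> bool" where
  "grid_close m k x y \<longleftrightarrow> (\<forall>j<m. \<bar>int (x j) - int (y j)\<bar> \<le> int k)"

definition grid_near :: "nat \<Rightarrow> (nat \<Rightarrow> nat) set \<Rightarrow> (nat \<Rightarrow> nat) \<Rightarrow> bool" where
  "grid_near m S x \<longleftrightarrow> (\<exists>y\<in>S. grid_close m 1 x y)"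

lemma grid_close_trans: "grid_close m k x y \<Longrightarrow> grid_close m l y z \<Longrightarrow> grid_close m (k + l) x z"
  unfolding grid_close_def by force

lemma grid_close_commute: "grid_close m k x y \<longleftrightarrow> grid_close m k y x"
  unfolding grid_close_def by (simp add: abs_minus_commute)

lemma not_grid_near_if_far:
  assumes "\<And>y. y \<in> S \<Longrightarrow> \<not> grid_close m 2 q y" and "grid_close m 1 t q"
  shows "\<not> grid_near m S t"
proof
  assume "grid_near m S t"
  then obtain y where y: "y \<in> S" "grid_close m 1 t y"
    by (auto simp: grid_near_def)
  have "grid_close m 1 q t"
    using assms(2) by (simp add: grid_close_commute)
  then have "grid_close m (1 + 1) q y"
    using y(2) by (rule grid_close_trans)
  with assms(1)[OF y(1)] show False
    by (simp add: numeral_2_eq_2)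
qed

lemma grid_cube_has_uncovered_point:
  fixes P N :: "nat \<Rightarrow> (nat \<Rightarrow> nat) set"
  assumes "0 < p"
    and separated: "\<And>j x y. j < m \<Longrightarrow> x \<in> P j \<Longrightarrow> y \<in> N j \<Longrightarrow> \<not> grid_close m 2 x y"
    and P_low: "\<And>j x. j < m \<Longrightarrow> x \<in> P j \<Longrightarrow> x j + 2 \<le> p"
    and N_high: "\<And>j y. j < m \<Longrightarrow> y \<in> N j \<Longrightarrow> 2 \<le> y j"
  shows "\<exists>q. (\<forall>j<m. q j < p) \<and> (\<forall>j<m. q \<notin> P j \<and> q \<notin> N j)"
proof -
  \<comment> \<open>Label j is 0 on the face x j = 0 and 1 on the face x j = p, but constant on every
    unit cube at a point of P j or N j.\<close>
  define label where "label x j =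
    (if grid_near m (N j) x \<or> (x j = p \<and> \<not> grid_near m (P j) x) then 1 else 0 :: nat)" for x j
  obtain q where q: "\<forall>j<m. q j < p"
    and labels: "\<forall>j<m. \<exists>r s. (\<forall>i<m. q i \<le> r i \<and> r i \<le> q i + 1)
      \<and> (\<forall>i<m. q i \<le> s i \<and> s i \<le> q i + 1) \<and> label r j \<noteq> label s j"
  proof (rule kuhn_lemma[OF \<open>0 < p\<close>, of m label])
    show "\<forall>x. (\<forall>i<m. x i \<le> p) \<longrightarrow> (\<forall>i<m. label x i = 0 \<or> label x i = 1)"
      by (simp add: label_def)
    show "\<forall>x. (\<forall>i<m. x i \<le> p) \<longrightarrow> (\<forall>i<m. x i = 0 \<longrightarrow> label x i = 0)"
      using N_high \<open>0 < p\<close> by (force simp: label_def grid_near_def grid_close_def)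
    show "\<forall>x. (\<forall>i<m. x i \<le> p) \<longrightarrow> (\<forall>i<m. x i = p \<longrightarrow> label x i = 1)"
      using P_low by (force simp: label_def grid_near_def grid_close_def)
  qed (rule that)
  have near_q: "grid_close m 1 t q" if "\<forall>i<m. q i \<le> t i \<and> t i \<le> q i + 1" for t
    using that by (force simp: grid_close_def)
  have "q \<notin> P j \<and> q \<notin> N j" if j: "j < m" for j
  proof (intro conjI notI)
    assume "q \<in> P j"
    have "label t j = 0" if "\<forall>i<m. q i \<le> t i \<and> t i \<le> q i + 1" for t
    proof -
      have "\<not> grid_near m (N j) t"
        using separated[OF j \<open>q \<in> P j\<close>] near_q[OF that] by (rule not_grid_near_if_far)
      moreover have "grid_near m (P j) t"
        using near_q[OF that] \<open>q \<in> P j\<close> by (auto simp: grid_near_def)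
      ultimately show ?thesis
        by (simp add: label_def)
    qed
    then show False
      using labels j by metis
  next
    assume "q \<in> N j"
    then have "label t j = 1" if "\<forall>i<m. q i \<le> t i \<and> t i \<le> q i + 1" for t
      using near_q[OF that] by (auto simp: label_def grid_near_def)
    then show False
      using labels j by metis
  qed
  with q show ?thesis
    by blast
qed

definition grid_embed :: "nat \<Rightarrow> (nat \<Rightarrow> nat) \<Rightarrow> int list" where
  "grid_embed m x = map (\<lambda>j. int m * int (x j)) [0..<m]"

lemma grid_embed_in_Lomega: "0 < m \<Longrightarrow> grid_embed m x \<in> Lomega"
  by (auto simp: grid_embed_def Lomega_def)

lemma coord_grid_embed: "j < m \<Longrightarrow> coord (grid_embed m x) j = int m * int (x j)"
  by (simp add: coord_def grid_embed_def)

lemma dinf_grid_embed_le: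
  assumes "grid_close m k x y"
  shows "dinf (grid_embed m x) (grid_embed m y) \<le> int m * int k"
proof -
  have "supdist (grid_embed m x) (grid_embed m y) \<le> int m * int k"
  proof (rule supdist_le)
    fix j assume "j < length (grid_embed m y)"
    then have "j < m"
      by (simp add: grid_embed_def)
    then have "\<bar>grid_embed m x ! j - grid_embed m y ! j\<bar> = int m * \<bar>int (x j) - int (y j)\<bar>"
      by (simp add: grid_embed_def abs_mult flip: right_diff_distrib)
    also have "\<dots> \<le> int m * int k"
      using assms \<open>j < m\<close> by (intro mult_left_mono) (auto simp: grid_close_def)
    finally show "\<bar>grid_embed m x ! j - grid_embed m y ! j\<bar> \<le> int m * int k" .
  qed simp
  then show ?thesis
    by (simp add: dinf_same_length grid_embed_def)
qed

definition grid_cells_below :: "nat \<Rightarrow> int list set set \<Rightarrow> nat \<Rightarrow> (nat \<Rightarrow> nat) set" where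
  "grid_cells_below m W j = {x. \<exists>A\<in>W. grid_embed m x \<in> A \<and> (\<exists>z\<in>A. coord z j \<le> int m)}"

definition grid_cells_above :: "nat \<Rightarrow> int list set set \<Rightarrow> nat \<Rightarrow> (nat \<Rightarrow> nat) set" where
  "grid_cells_above m W j = {x. \<exists>A\<in>W. grid_embed m x \<in> A \<and> (\<forall>z\<in>A. int m < coord z j)}"

lemma grid_cells_below_above_far:
  assumes "r_disjoint dinf r W" and "2 * m < r"
    and "x \<in> grid_cells_below m W j" and "y \<in> grid_cells_above m W j"
  shows "\<not> grid_close m 2 x y"
proof
  assume close: "grid_close m 2 x y"
  obtain A z where A: "A \<in> W" "grid_embed m x \<in> A" "z \<in> A" "coord z j \<le> int m"
    using assms(3) by (auto simp: grid_cells_below_def)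
  obtain A' where A': "A' \<in> W" "grid_embed m y \<in> A'" "\<forall>z\<in>A'. int m < coord z j"
    using assms(4) by (auto simp: grid_cells_above_def)
  have "A = A'"
  proof (rule ccontr)
    assume "A \<noteq> A'"
    then have "int r \<le> dinf (grid_embed m x) (grid_embed m y)"
      using assms(1) A(1,2) A'(1,2) unfolding r_disjoint_def by blast
    then show False
      using dinf_grid_embed_le[OF close] assms(2) by simp
  qed
  then show False
    using A(3,4) A'(3) by fastforce
qed

lemma grid_cells_below_le:
  assumes "0 < m" and "j < m" and C: "\<forall>A\<in>W. \<forall>x\<in>A. \<forall>y\<in>A. dinf x y \<le> C"
    and "x \<in> grid_cells_below m W j"
  shows "x j \<le> m + nat C"
proof -
  obtain A z where A: "A \<in> W" "grid_embed m x \<in> A" "z \<in> A" "coord z j \<le> int m"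
    using assms(4) by (auto simp: grid_cells_below_def)
  have "dinf (grid_embed m x) z \<le> C" and "0 \<le> C"
    using C A(1-3) dinf_self[of "grid_embed m x"] by force+
  then have "\<bar>int m * int (x j) - coord z j\<bar> \<le> C"
    using abs_coord_diff_le_dinf[of "grid_embed m x" j z] coord_grid_embed[OF assms(2)] by simp
  moreover have "int (x j) \<le> int m * int (x j)"
    using mult_right_mono[of 1 "int m" "int (x j)"] assms(1) by simp
  ultimately show ?thesis
    using A(4) \<open>0 \<le> C\<close> by linarith
qed

lemma grid_cells_above_ge:
  assumes "j < m" and "y \<in> grid_cells_above m W j"
  shows "2 \<le> y j"
proof -
  have "int m < int m * int (y j)"
    using assms(2) coord_grid_embed[OF assms(1)] by (auto simp: grid_cells_above_def)
  moreover have "int m * int (y j) \<le> int m" if "y j \<le> 1"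
    using mult_left_mono[of "int (y j)" 1 "int m"] that by simp
  ultimately show ?thesis
    by linarith
qed

lemma unif_bounded_common_bound:
  assumes "finite I" and "\<forall>i\<in>I. unif_bounded d (V i)"
  obtains C where "\<forall>i\<in>I. \<forall>A\<in>V i. \<forall>x\<in>A. \<forall>y\<in>A. d x y \<le> C"
proof -
  obtain c where c: "\<forall>i\<in>I. \<forall>A\<in>V i. \<forall>x\<in>A. \<forall>y\<in>A. d x y \<le> c i"
    using assms(2) unfolding unif_bounded_def by metis
  show ?thesis
    using c assms(1) by (intro that[of "Max (c ` I)"]) (fastforce intro: order_trans[OF _ Max_ge])
qed

lemma Lomega_not_covered_by_interval:
  assumes "0 < m"
    and V: "\<forall>i\<in>{2*m+1..3*m}. unif_bounded dinf (V i) \<and> r_disjoint dinf i (V i)"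
    and cover: "Lomega \<subseteq> \<Union>(\<Union>i\<in>{2*m+1..3*m}. V i)"
  shows False
proof -
  obtain C where C: "\<forall>i\<in>{2*m+1..3*m}. \<forall>A\<in>V i. \<forall>x\<in>A. \<forall>y\<in>A. dinf x y \<le> C"
    using unif_bounded_common_bound[of "{2*m+1..3*m}" dinf V] V by blast
  define P where "P j = grid_cells_below m (V (2*m+1+j)) j" for j
  define N where "N j = grid_cells_above m (V (2*m+1+j)) j" for j
  have "\<exists>q. (\<forall>j<m. q j < m + nat C + 2) \<and> (\<forall>j<m. q \<notin> P j \<and> q \<notin> N j)"
  proof (rule grid_cube_has_uncovered_point)
    fix j x y assume "j < m" "x \<in> P j" "y \<in> N j"
    then show "\<not> grid_close m 2 x y"
      using V grid_cells_below_above_far[of "2*m+1+j" "V (2*m+1+j)" m x j y]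
      by (simp add: P_def N_def)
  next
    fix j x assume j: "j < m" and "x \<in> P j"
    have "\<forall>A\<in>V (2*m+1+j). \<forall>x\<in>A. \<forall>y\<in>A. dinf x y \<le> C"
      using bspec[OF C, of "2*m+1+j"] j by simp
    then show "x j + 2 \<le> m + nat C + 2"
      using grid_cells_below_le[OF \<open>0 < m\<close> j] \<open>x \<in> P j\<close> by (simp add: P_def)
  next
    fix j y assume "j < m" "y \<in> N j"
    then show "2 \<le> y j"
      using grid_cells_above_ge by (simp add: N_def)
  qed simp
  then obtain q where q: "\<forall>j<m. q \<notin> P j \<and> q \<notin> N j"
    by blast
  obtain i A where "i \<in> {2*m+1..3*m}" "A \<in> V i" "grid_embed m q \<in> A"
    using cover grid_embed_in_Lomega[OF \<open>0 < m\<close>, of q] by blast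
  moreover define j where "j = i - (2*m+1)"
  ultimately have "j < m" "A \<in> V (2*m+1+j)" "grid_embed m q \<in> A"
    using \<open>0 < m\<close> by auto
  then have "q \<in> P j \<or> q \<in> N j"
    by (auto simp: P_def N_def grid_cells_below_def grid_cells_above_def not_le)
  with q \<open>j < m\<close> show False
    by blast
qed

lemma interval_in_Aset_Lomega:
  assumes "0 < m"
  shows "{2*m+1..3*m} \<in> Aset Lomega dinf"
proof -
  have "{2*m+1..3*m} \<in> Fin Npos"
    using assms by (auto simp: Fin_def Npos_def)
  moreover have "\<not> (\<exists>V. (\<forall>i\<in>{2*m+1..3*m}. V i \<subseteq> Pow Lomega \<and> unif_bounded dinf (V i)
      \<and> r_disjoint dinf i (V i)) \<and> Lomega \<subseteq> \<Union>(\<Union>i\<in>{2*m+1..3*m}. V i))"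
  proof
    assume "\<exists>V. (\<forall>i\<in>{2*m+1..3*m}. V i \<subseteq> Pow Lomega \<and> unif_bounded dinf (V i)
      \<and> r_disjoint dinf i (V i)) \<and> Lomega \<subseteq> \<Union>(\<Union>i\<in>{2*m+1..3*m}. V i)"
    then obtain V where "\<forall>i\<in>{2*m+1..3*m}. unif_bounded dinf (V i) \<and> r_disjoint dinf i (V i)"
      and "Lomega \<subseteq> \<Union>(\<Union>i\<in>{2*m+1..3*m}. V i)"
      by auto
    then show False
      by (rule Lomega_not_covered_by_interval[OF assms])
  qed
  ultimately show ?thesis
    unfolding Aset_def mem_Collect_eq by (rule conjI)
qed

lemma Lomega_unbounded: "\<not> bounded_space Lomega dinf"
proof
  assume "bounded_space Lomega dinf"
  then obtain C where C: "\<forall>x\<in>Lomega. \<forall>y\<in>Lomega. dinf x y \<le> C"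
    by (auto simp: bounded_space_def)
  have "[0] \<in> Lomega" "[\<bar>C\<bar> + 1] \<in> Lomega"
    by (auto simp: Lomega_def)
  then have "dinf [0] [\<bar>C\<bar> + 1] \<le> C"
    using C by blast
  moreover have "\<bar>coord [0] 0 - coord [\<bar>C\<bar> + 1] 0\<bar> \<le> dinf [0] [\<bar>C\<bar> + 1]"
    by (rule abs_coord_diff_le_dinf)
  ultimately show False
    by (simp add: coord_def)
qed

lemma Aset_subset_Fin: "Aset S d \<subseteq> Fin Npos"
  unfolding Aset_def by (rule Collect_restrict)

lemma Ord_le_Aset_Lomega: "Ord_le Npos (Aset Lomega dinf) (\<infinity> :: enat)"
proof (rule Ord_le.step, intro ballI)
  fix a
  have "Ord_le Npos (Mup Npos (Aset Lomega dinf) {a}) (enat (2 ^ a))"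
  proof (rule Ord_le_enat_if_card_le[OF Mup_subset_Fin], intro ballI)
    fix \<tau> assume "\<tau> \<in> Mup Npos (Aset Lomega dinf) {a}"
    then have "insert a \<tau> \<in> Aset Lomega dinf" "a \<notin> \<tau>" "finite \<tau>"
      by (auto simp: Mup_def Fin_def)
    then show "card \<tau> \<le> 2 ^ a"
      using card_le_if_in_Aset_Lomega[of "insert a \<tau>" a] by simp
  qed
  then show "\<exists>\<beta><(\<infinity> :: enat). Ord_le Npos (Mup Npos (Aset Lomega dinf) {a}) \<beta>"
    by (intro exI[of _ "enat (2 ^ a)"] conjI) simp_all
qed

lemma not_Ord_lt_Aset_Lomega: "\<not> Ord_lt Npos (Aset Lomega dinf) (\<infinity> :: enat)"
proof
  assume "Ord_lt Npos (Aset Lomega dinf) (\<infinity> :: enat)"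
  then obtain \<beta> :: enat where "\<beta> < \<infinity>" "Ord_le Npos (Aset Lomega dinf) \<beta>"
    by (auto simp: Ord_lt_def)
  then obtain n where n: "Ord_le Npos (Aset Lomega dinf) (enat n)"
    by (cases \<beta>) auto
  have "{2*(n+1)+1..3*(n+1)} \<in> Aset Lomega dinf"
    by (rule interval_in_Aset_Lomega) simp
  then have "enat (card {2*(n+1)+1..3*(n+1)}) \<le> enat n"
    by (rule card_le_if_Ord_le[OF n Aset_subset_Fin])
  then show False
    by simp
qed

theorem theorem2:
  shows "trasdim_eq_omega Lomega dinf"
  using Lomega_unbounded Ord_le_Aset_Lomega not_Ord_lt_Aset_Lomega
  by (simp add: trasdim_eq_omega_def Ord_eq_def)

end
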